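(* Let $H\ge2$ be fixed and assume the ranking mechanism is consistent. (i) If $K_n\xrightarrow{w}e$, then $\mathbb E(F_{n;jps}(t))\to F(t)$ as $n\to\infty$ for every continuity point $t$ of $F$. (ii) Conversely, if for every population CDF $F$ (with any consistent ranking mechanism) one has $\mathbb E(F_{n;jps}(t))\to F(t)$ as $n\to\infty$ at every continuity point $t$ of $F$, then $K_n\xrightarrow{w}e$. Thus estimators of the form $F_{n;jps}$ are asymptotically unbiased if and only if $K_n\xrightarrow{w}e$.
   Context: Setting (judgment post stratification, JPS). Fix an integer set size $H\ge 2$ and a sample size $n\ge 1$. A JPS sample is a collection of $n$ i.i.d. pairs $(X_1,R_1),\dots,(X_n,R_n)$, where $R_i\in\{1,\dots,H\}$ with $P(R_i=r)=1/H$ for each $r$, and conditionally on $R_i=r$ the real random variable $X_i$ has CDF $F_{[r]}$. Let $F$ be the population CDF. The ranking mechanism is called consistent if $F(t)=\frac1H\sum_{r=1}^H F_{[r]}(t)$ for all $t\in\mathbb R$. Define $I_{ir}=\mathbb I(R_i=r)$, $N_r=\sum_{i=1}^n I_{ir}$, $d_n=\sum_{r=1}^H\mathbb I(N_r>0)$, and $W_r=\mathbb I(N_r>0)/d_n$. Given a sequence of CDFs $(K_n)_{n\ge1}$ on $\mathbb R$, define $F_{n;[r]}(t)=\frac1{N_r}\sum_{i=1}^n K_n(t-X_i)I_{ir}$ if $N_r>0$ and $F_{n;[r]}(t)=0$ otherwise, and $F_{n;jps}(t)=\sum_{r=1}^H W_rF_{n;[r]}(t)$. Let $e(t)=\mathbb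 I(t\ge0)$. For CDFs $G_n,G$, $G_n\xrightarrow{w}G$ means $G_n(t)\to G(t)$ as $n\to\infty$ for every continuity point $t$ of $G$. *)

theory Defs
  imports "HOL-Probability.Probability"
begin

definition is_cdf :: "(real \<Rightarrow> real) \<Rightarrow> bool" where
  "is_cdf G \<longleftrightarrow> (\<exists>M. real_distribution M \<and> cdf M = G)"

definition e_cdf :: "real \<Rightarrow> real" where
  "e_cdf t = (if t \<ge> 0 then 1 else 0)"

text \<open>Law of a single JPS pair (X,R): R uniform on {1..H}, and given R = r,
  X has distribution M r (whose CDF is F_[r]).\<close>
definition jps_law :: "nat \<Rightarrow> (nat \<Rightarrow> real measure) \<Rightarrow> (real \<times> nat) measure" where
  "jps_law H M = uniform_count_measure {1..H} \<bind>
      (\<lambda>r. distr (M r) (borel \<Otimes>\<^sub>M count_space UNIV) (\<lambda>x. (x, r)))"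

text \<open>Joint law of the JPS sample (X_1,R_1),...,(X_n,R_n) (indices 0..n-1), i.i.d.\<close>
definition jps_sample :: "nat \<Rightarrow> (nat \<Rightarrow> real measure) \<Rightarrow> nat \<Rightarrow> (nat \<Rightarrow> real \<times> nat) measure" where
  "jps_sample H M n = PiM {..<n} (\<lambda>_. jps_law H M)"

definition jps_N :: "nat \<Rightarrow> (nat \<Rightarrow> real \<times> nat) \<Rightarrow> nat \<Rightarrow> nat" where
  "jps_N n \<omega> r = card {i \<in> {..<n}. snd (\<omega> i) = r}"

definition jps_d :: "nat \<Rightarrow> nat \<Rightarrow> (nat \<Rightarrow> real \<times> nat) \<Rightarrow> nat" where
  "jps_d H n \<omega> = card {r \<in> {1..H}. jps_N n \<omega> r > 0}"

definition jps_W :: "nat \<Rightarrow> nat \<Rightarrow> (nat \<Rightarrow> real \<times> nat) \<Rightarrow> nat \<Rightarrow> real" where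
  "jps_W H n \<omega> r = (if jps_N n \<omega> r > 0 then 1 else 0) / real (jps_d H n \<omega>)"

definition jps_Fr :: "(real \<Rightarrow> real) \<Rightarrow> nat \<Rightarrow> (nat \<Rightarrow> real \<times> nat) \<Rightarrow> nat \<Rightarrow> real \<Rightarrow> real" where
  "jps_Fr Kn n \<omega> r t =
     (if jps_N n \<omega> r > 0
      then (\<Sum>i\<in>{..<n}. Kn (t - fst (\<omega> i)) * (if snd (\<omega> i) = r then 1 else 0)) / real (jps_N n \<omega> r)
      else 0)"

definition jps_est :: "nat \<Rightarrow> (real \<Rightarrow> real) \<Rightarrow> nat \<Rightarrow> (nat \<Rightarrow> real \<times> nat) \<Rightarrow> real \<Rightarrow> real" where
  "jps_est H Kn n \<omega> t = (\<Sum>r\<in>{1..H}. jps_W H n \<omega> r * jps_Fr Kn n \<omega> r t)"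

definition jps_mean :: "nat \<Rightarrow> (nat \<Rightarrow> real measure) \<Rightarrow> (nat \<Rightarrow> real \<Rightarrow> real) \<Rightarrow> nat \<Rightarrow> real \<Rightarrow> real" where
  "jps_mean H M K n t = integral\<^sup>L (jps_sample H M n) (\<lambda>\<omega>. jps_est H (K n) n \<omega> t)"

end

theory Submission
  imports Defs
begin

text \<open>
  Given its rank \<open>r\<close>, each observation has law \<open>F_[r]\<close> independently of all ranks, while
  \<open>W_r\<close> and \<open>N_r\<close> are functions of the ranks alone. Conditioning on the ranks therefore gives
  \<open>E F_{n;jps}(t) = \<Sum>_r E(W_r) \<integral> K_n(t - x) dF_[r](x)\<close>. Every stratum is occupied with
  probability at least \<open>1 - H (1 - 1/H)^n\<close>, and then \<open>W_r = 1/H\<close>; hence \<open>E(W_r) \<rightarrow> 1/H\<close>.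
  If \<open>K_n \<rightarrow> e\<close> weakly, then \<open>K_n(t - x) \<rightarrow> 1(x < t)\<close> for \<open>x \<noteq> t\<close>, and \<open>x = t\<close> is an atom
  of no \<open>F_[r]\<close> when \<open>t\<close> is a continuity point of \<open>F\<close>, so dominated convergence yields
  \<open>E F_{n;jps}(t) \<rightarrow> F(t)\<close>. Conversely, for the population degenerate at \<open>0\<close> the identity
  reads \<open>E F_{n;jps}(t) = K_n(t) \<Sum>_r E(W_r)\<close>, and \<open>\<Sum>_r E(W_r) \<rightarrow> 1\<close> forces \<open>K_n(t) \<rightarrow> e(t)\<close>.
\<close>

section \<open>The law of a single pair\<close>

lemma jps_law_kernel_measurable:
  assumes M: "\<forall>r\<in>{1..H}. real_distribution (M r)"
  shows "(\<lambda>r. distr (M r) (borel \<Otimes>\<^sub>M count_space UNIV) (\<lambda>x. (x, r)))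
           \<in> uniform_count_measure {1..H} \<rightarrow>\<^sub>M prob_algebra (borel \<Otimes>\<^sub>M count_space UNIV)"
proof -
  have "(\<lambda>r. distr (M r) (borel \<Otimes>\<^sub>M count_space UNIV) (\<lambda>x. (x, r)))
          \<in> count_space {1..H} \<rightarrow>\<^sub>M prob_algebra (borel \<Otimes>\<^sub>M count_space UNIV)"
  proof (subst measurable_count_space_eq1, rule Pi_I)
    fix r assume "r \<in> {1..H}"
    then interpret real_distribution "M r" using M by auto
    have "(\<lambda>x. (x, r)) \<in> M r \<rightarrow>\<^sub>M borel \<Otimes>\<^sub>M count_space UNIV"
      by measurable
    then show "distr (M r) (borel \<Otimes>\<^sub>M count_space UNIV) (\<lambda>x. (x, r))
                 \<in> space (prob_algebra (borel \<Otimes>\<^sub>M count_space UNIV))"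
      by (auto simp: space_prob_algebra intro!: prob_space_distr)
  qed
  then show ?thesis
    by (subst measurable_cong_sets[OF sets_uniform_count_measure_count_space refl])
qed

lemma
  assumes H: "H \<ge> 1" and M: "\<forall>r\<in>{1..H}. real_distribution (M r)"
  shows prob_space_jps_law: "prob_space (jps_law H M)"
    and sets_jps_law: "sets (jps_law H M) = sets (borel \<Otimes>\<^sub>M count_space UNIV)"
proof -
  have U: "uniform_count_measure {1..H} \<in> space (prob_algebra (uniform_count_measure {1..H}))"
    using H by (auto simp: space_prob_algebra intro!: prob_space_uniform_count_measure)
  show "prob_space (jps_law H M)"
    unfolding jps_law_def by (rule prob_space_bind'[OF U jps_law_kernel_measurable[OF M]])
  show "sets (jps_law H M) = sets (borel \<Otimes>\<^sub>M count_space UNIV)"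
    unfolding jps_law_def by (rule sets_bind'[OF U jps_law_kernel_measurable[OF M]])
qed

lemma space_jps_law:
  assumes "H \<ge> 1" and "\<forall>r\<in>{1..H}. real_distribution (M r)"
  shows "space (jps_law H M) = UNIV"
  using sets_eq_imp_space_eq[OF sets_jps_law[OF assms]] by (simp add: space_pair_measure)

lemma integral_jps_law_stratum:
  fixes h :: "real \<Rightarrow> real"
  assumes H: "H \<ge> 1" and M: "\<forall>r\<in>{1..H}. real_distribution (M r)" and r: "r \<in> {1..H}"
    and hm: "h \<in> borel_measurable borel" and h0: "\<And>x. 0 \<le> h x" and h1: "\<And>x. h x \<le> 1"
  shows "(\<integral>y. h (fst y) * (if snd y = r then 1 else 0) \<partial>jps_law H M) = (\<integral>x. h x \<partial>M r) / real H"
proof -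
  interpret Mr: real_distribution "M r" using M r by auto
  let ?B = "borel \<Otimes>\<^sub>M count_space UNIV :: (real \<times> nat) measure"
  let ?f = "\<lambda>y::real \<times> nat. h (fst y) * (if snd y = r then 1 else 0)"
  have fm: "?f \<in> borel_measurable ?B" using hm by measurable
  have "(\<integral>\<^sup>+y. ennreal (?f y) \<partial>jps_law H M)
      = (\<integral>\<^sup>+s. \<integral>\<^sup>+y. ennreal (?f y) \<partial>distr (M s) ?B (\<lambda>x. (x, s)) \<partial>uniform_count_measure {1..H})"
    unfolding jps_law_def using fm measurable_prob_algebraD[OF jps_law_kernel_measurable[OF M]]
    by (intro nn_integral_bind) auto
  also have "\<dots> = (\<integral>\<^sup>+s. (if s = r then \<integral>\<^sup>+x. ennreal (h x) \<partial>M r else 0) \<partial>uniform_count_measure {1..H})"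
  proof (rule nn_integral_cong)
    fix s assume "s \<in> space (uniform_count_measure {1..H})"
    then interpret Ms: real_distribution "M s" using M by (auto simp: space_uniform_count_measure)
    have "(\<lambda>x. (x, s)) \<in> M s \<rightarrow>\<^sub>M ?B" by measurable
    then show "(\<integral>\<^sup>+y. ennreal (?f y) \<partial>distr (M s) ?B (\<lambda>x. (x, s)))
                 = (if s = r then \<integral>\<^sup>+x. ennreal (h x) \<partial>M r else 0)"
      by (subst nn_integral_distr) (use fm in auto)
  qed
  also have "\<dots> = ennreal (1 / real H) * (\<integral>\<^sup>+x. ennreal (h x) \<partial>M r)"
    unfolding uniform_count_measure_def using r
    by (subst nn_integral_point_measure_finite) (auto simp: if_distrib sum.delta cong: if_cong)
  also have "(\<integral>\<^sup>+x. ennreal (h x) \<partial>M r) = ennreal (\<integral>x. h x \<partial>M r)"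
    using h0 h1 hm by (intro nn_integral_eq_integral Mr.integrable_const_bound[where B=1]) auto
  finally have "(\<integral>\<^sup>+y. ennreal (?f y) \<partial>jps_law H M) = ennreal ((\<integral>x. h x \<partial>M r) / real H)"
    using h0 by (simp add: ennreal_mult'[symmetric] integral_nonneg)
  moreover have "?f \<in> borel_measurable (jps_law H M)"
    using fm measurable_cong_sets[OF sets_jps_law[OF H M] refl] by blast
  ultimately show ?thesis
    using h0 by (subst integral_eq_nn_integral) (auto intro!: integral_nonneg)
qed

lemma integral_jps_law_stratum_rank_only:
  fixes h :: "real \<Rightarrow> real" and c :: "real \<times> nat \<Rightarrow> real"
  assumes H: "H \<ge> 1" and M: "\<forall>r\<in>{1..H}. real_distribution (M r)" and r: "r \<in> {1..H}"
    and hm: "h \<in> borel_measurable borel" and h0: "\<And>x. 0 \<le> h x" and h1: "\<And>x. h x \<le> 1"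
    and c: "\<And>x x'. c (x, r) = c (x', r)"
  shows "(\<integral>y. c y * (h (fst y) * (if snd y = r then 1 else 0)) \<partial>jps_law H M)
       = c (0, r) * ((\<integral>x. h x \<partial>M r) / real H)"
proof -
  have "(\<integral>y. c y * (h (fst y) * (if snd y = r then 1 else 0)) \<partial>jps_law H M)
      = (\<integral>y. c (0, r) * (h (fst y) * (if snd y = r then 1 else 0)) \<partial>jps_law H M)"
  proof (rule Bochner_Integration.integral_cong[OF refl])
    fix y :: "real \<times> nat"
    show "c y * (h (fst y) * (if snd y = r then 1 else 0))
        = c (0, r) * (h (fst y) * (if snd y = r then 1 else 0))"
      using c[of "fst y" 0] by (cases y) auto
  qed
  then show ?thesis
    by (simp add: integral_jps_law_stratum[OF H M r hm h0 h1])
qed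

section \<open>The sample\<close>

lemma prob_space_jps_sample:
  assumes "H \<ge> 1" and "\<forall>r\<in>{1..H}. real_distribution (M r)"
  shows "prob_space (jps_sample H M n)"
  unfolding jps_sample_def using prob_space_jps_law[OF assms] by (rule prob_space_PiM)

lemma space_jps_sample:
  assumes "H \<ge> 1" and "\<forall>r\<in>{1..H}. real_distribution (M r)"
  shows "space (jps_sample H M n) = PiE {..<n} (\<lambda>_. UNIV)"
  unfolding jps_sample_def by (simp add: space_PiM space_jps_law[OF assms])

lemma
  assumes H: "H \<ge> 1" and M: "\<forall>r\<in>{1..H}. real_distribution (M r)" and i: "i < n"
  shows measurable_jps_sample_fst: "(\<lambda>\<omega>. fst (\<omega> i)) \<in> borel_measurable (jps_sample H M n)"
    and measurable_jps_sample_snd: "(\<lambda>\<omega>. snd (\<omega> i)) \<in> jps_sample H M n \<rightarrow>\<^sub>M count_space UNIV"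
proof -
  have coord: "(\<lambda>\<omega>. \<omega> i) \<in> jps_sample H M n \<rightarrow>\<^sub>M jps_law H M"
    unfolding jps_sample_def using i by simp
  have "fst \<in> jps_law H M \<rightarrow>\<^sub>M borel" "snd \<in> jps_law H M \<rightarrow>\<^sub>M count_space UNIV"
    by (simp_all add: measurable_cong_sets[OF sets_jps_law[OF H M] refl])
  then show "(\<lambda>\<omega>. fst (\<omega> i)) \<in> borel_measurable (jps_sample H M n)"
    and "(\<lambda>\<omega>. snd (\<omega> i)) \<in> jps_sample H M n \<rightarrow>\<^sub>M count_space UNIV"
    by (auto intro: measurable_compose[OF coord])
qed

text \<open>
  The key independence step: a bounded statistic \<open>a\<close> that sees the \<open>i\<close>-th pair only through
  its rank is, on \<open>{R\<^sub>i = r}\<close>, independent of \<open>X\<^sub>i\<close>, whose conditional law there is \<open>M r\<close>.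
\<close>
lemma integral_jps_sample_split_stratum:
  fixes h :: "real \<Rightarrow> real" and a :: "(nat \<Rightarrow> real \<times> nat) \<Rightarrow> real"
  assumes H: "H \<ge> 1" and M: "\<forall>r\<in>{1..H}. real_distribution (M r)" and r: "r \<in> {1..H}"
    and i: "i < n"
    and am: "a \<in> borel_measurable (jps_sample H M n)" and aB: "\<And>\<omega>. \<bar>a \<omega>\<bar> \<le> B"
    and a_rank_only: "\<And>\<omega> x x' s. a (fun_upd \<omega> i (x, s)) = a (fun_upd \<omega> i (x', s))"
    and hm: "h \<in> borel_measurable borel" and h0: "\<And>x. 0 \<le> h x" and h1: "\<And>x. h x \<le> 1"
  shows "(\<integral>\<omega>. a \<omega> * (h (fst (\<omega> i)) * (if snd (\<omega> i) = r then 1 else 0)) \<partial>jps_sample H M n)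
       = (\<integral>x. h x \<partial>M r) * (\<integral>\<omega>. a \<omega> * (if snd (\<omega> i) = r then 1 else 0) \<partial>jps_sample H M n)"
proof -
  let ?Q = "jps_law H M" and ?S = "jps_sample H M n"
  interpret Q: prob_space ?Q by (rule prob_space_jps_law[OF H M])
  interpret P: product_sigma_finite "\<lambda>_. ?Q" by unfold_locales
  interpret S: prob_space ?S by (rule prob_space_jps_sample[OF H M])
  interpret Mr: real_distribution "M r" using M r by auto
  define I where "I = {..<n} - {i}"
  have I: "finite I" "i \<notin> I" by (auto simp: I_def)
  have S_eq: "?S = PiM (insert i I) (\<lambda>_. ?Q)" unfolding jps_sample_def I_def using i
    by (simp add: insert_absorb)
  have split: "(\<integral>\<omega>. a \<omega> * (k (fst (\<omega> i)) * (if snd (\<omega> i) = r then 1 else 0)) \<partial>?S)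
      = (\<integral>x. a (x(i := (0, r))) * ((\<integral>x. k x \<partial>M r) / real H) \<partial>PiM I (\<lambda>_. ?Q))"
    if km: "k \<in> borel_measurable borel" and k0: "\<And>x. 0 \<le> k x" and k1: "\<And>x. k x \<le> 1" for k
  proof -
    let ?f = "\<lambda>\<omega>. a \<omega> * (k (fst (\<omega> i)) * (if snd (\<omega> i) = r then 1 else 0))"
    have "?f \<in> borel_measurable ?S"
      using am measurable_compose[OF measurable_jps_sample_fst[OF H M i] km]
        measurable_jps_sample_snd[OF H M i] by measurable
    moreover have "norm (?f \<omega>) \<le> B" for \<omega>
    proof -
      have "\<bar>k (fst (\<omega> i)) * (if snd (\<omega> i) = r then 1 else 0)\<bar> \<le> 1" using k0 k1 by auto
      then have "\<bar>?f \<omega>\<bar> \<le> \<bar>a \<omega>\<bar>" by (simp add: abs_mult mult_left_le)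
      then show ?thesis using aB[of \<omega>] by simp
    qed
    ultimately have "integrable ?S ?f" by (intro S.integrable_const_bound[where B=B]) auto
    then have "(\<integral>\<omega>. ?f \<omega> \<partial>?S) = (\<integral>x. (\<integral>y. ?f (x(i := y)) \<partial>?Q) \<partial>PiM I (\<lambda>_. ?Q))"
      unfolding S_eq by (rule P.product_integral_insert[OF I])
    also have "\<dots> = (\<integral>x. a (x(i := (0, r))) * ((\<integral>x. k x \<partial>M r) / real H) \<partial>PiM I (\<lambda>_. ?Q))"
      using integral_jps_law_stratum_rank_only[OF H M r km k0 k1, of "\<lambda>y. a (_(i := y))"] a_rank_only
      by simp
    finally show ?thesis .
  qed
  have "(\<integral>x. a (x(i := (0, r))) * ((\<integral>x. h x \<partial>M r) / real H) \<partial>PiM I (\<lambda>_. ?Q))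
      = (\<integral>x. h x \<partial>M r) * (\<integral>x. a (x(i := (0, r))) * (1 / real H) \<partial>PiM I (\<lambda>_. ?Q))"
    by (subst integral_mult_right_zero[symmetric]) (simp add: ac_simps)
  then show ?thesis
    using split[OF hm h0 h1] split[of "\<lambda>_. 1"] Mr.prob_space by simp
qed

section \<open>Stratum counts and weights\<close>

lemma real_jps_N: "real (jps_N n \<omega> r) = (\<Sum>j<n. if snd (\<omega> j) = r then 1 else 0)"
  unfolding jps_N_def by (simp add: sum.If_cases Int_def)

lemma real_jps_d: "real (jps_d H n \<omega>) = (\<Sum>s\<in>{1..H}. min 1 (real (jps_N n \<omega> s)))"
proof -
  have "real (jps_d H n \<omega>) = (\<Sum>s\<in>{1..H}. if jps_N n \<omega> s > 0 then 1 else 0)"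
    unfolding jps_d_def by (simp add: sum.If_cases Int_def)
  then show ?thesis by (auto intro!: sum.cong)
qed

lemma jps_W_eq_min: "jps_W H n \<omega> r = min 1 (real (jps_N n \<omega> r)) / real (jps_d H n \<omega>)"
  unfolding jps_W_def by auto

lemma jps_W_nonneg: "0 \<le> jps_W H n \<omega> r"
  and jps_W_le_1: "jps_W H n \<omega> r \<le> 1"
  unfolding jps_W_def by (cases "jps_d H n \<omega> = 0"; simp)+

lemma abs_jps_W_div_N_le_1: "\<bar>jps_W H n \<omega> r / real (jps_N n \<omega> r)\<bar> \<le> 1"
proof (cases "jps_N n \<omega> r > 0")
  case True
  then show ?thesis
    using jps_W_nonneg[of H n \<omega> r] jps_W_le_1[of H n \<omega> r] by (simp add: divide_le_eq_1)
qed (simp add: jps_W_def)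

lemma jps_W_div_N_fun_upd_fst:
  "jps_W H n (fun_upd \<omega> i (x, s)) r / real (jps_N n (fun_upd \<omega> i (x, s)) r)
     = jps_W H n (fun_upd \<omega> i (x', s)) r / real (jps_N n (fun_upd \<omega> i (x', s)) r)"
proof -
  have "jps_N n (fun_upd \<omega> i (x, s)) = jps_N n (fun_upd \<omega> i (x', s))"
    unfolding jps_N_def by (simp add: fun_upd_def)
  then show ?thesis unfolding jps_W_def jps_d_def by simp
qed

lemma jps_W_full: "\<forall>s\<in>{1..H}. jps_N n \<omega> s > 0 \<Longrightarrow> r \<in> {1..H} \<Longrightarrow> jps_W H n \<omega> r = 1 / real H"
proof -
  assume "\<forall>s\<in>{1..H}. jps_N n \<omega> s > 0" "r \<in> {1..H}"
  moreover from this(1) have "{s \<in> {1..H}. 0 < jps_N n \<omega> s} = {1..H}" by auto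
  ultimately show ?thesis unfolding jps_W_def jps_d_def by simp
qed

lemma abs_jps_W_sub_le_empty_strata:
  assumes r: "r \<in> {1..H}"
  shows "\<bar>jps_W H n \<omega> r - 1 / real H\<bar> \<le> (\<Sum>s\<in>{1..H}. if jps_N n \<omega> s = 0 then 1 else 0)"
proof (cases "\<exists>s\<in>{1..H}. jps_N n \<omega> s = 0")
  case True
  then obtain s where s: "s \<in> {1..H}" "jps_N n \<omega> s = 0" by auto
  have "\<bar>jps_W H n \<omega> r - 1 / real H\<bar> \<le> 1"
  proof -
    have "0 \<le> 1 / real H" "1 / real H \<le> 1" using r by auto
    then show ?thesis using jps_W_nonneg[of H n \<omega> r] jps_W_le_1[of H n \<omega> r] by linarith
  qed
  also have "1 \<le> (\<Sum>s\<in>{1..H}. if jps_N n \<omega> s = 0 then 1 else 0 :: real)"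
    using member_le_sum[OF s(1), of "\<lambda>s. if jps_N n \<omega> s = 0 then 1 else 0 :: real"] s by simp
  finally show ?thesis .
next
  case False
  then have "jps_W H n \<omega> r = 1 / real H" using r by (intro jps_W_full) auto
  then show ?thesis by (simp add: sum_nonneg)
qed

lemma
  assumes H: "H \<ge> 1" and M: "\<forall>r\<in>{1..H}. real_distribution (M r)"
  shows measurable_jps_W: "(\<lambda>\<omega>. jps_W H n \<omega> r) \<in> borel_measurable (jps_sample H M n)"
    and measurable_jps_W_div_N:
      "(\<lambda>\<omega>. jps_W H n \<omega> r / real (jps_N n \<omega> r)) \<in> borel_measurable (jps_sample H M n)"
proof -
  have [measurable]: "(\<lambda>\<omega>. real (jps_N n \<omega> s)) \<in> borel_measurable (jps_sample H M n)" for s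
    unfolding real_jps_N
    by (intro borel_measurable_sum measurable_compose[OF measurable_jps_sample_snd[OF H M]]) auto
  show "(\<lambda>\<omega>. jps_W H n \<omega> r) \<in> borel_measurable (jps_sample H M n)"
    unfolding jps_W_eq_min real_jps_d by measurable
  then show "(\<lambda>\<omega>. jps_W H n \<omega> r / real (jps_N n \<omega> r)) \<in> borel_measurable (jps_sample H M n)"
    by measurable
qed

section \<open>The mean of the estimator\<close>

lemma jps_est_eq_sum:
  "jps_est H Kn n \<omega> t = (\<Sum>r\<in>{1..H}. \<Sum>i<n. jps_W H n \<omega> r / real (jps_N n \<omega> r) *
      (Kn (t - fst (\<omega> i)) * (if snd (\<omega> i) = r then 1 else 0)))"
  unfolding jps_est_def jps_Fr_def jps_W_def
  by (intro sum.cong refl) (auto simp: sum_distrib_left sum_divide_distrib ac_simps)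

lemma sum_jps_W_div_N:
  "(\<Sum>i<n. jps_W H n \<omega> r / real (jps_N n \<omega> r) * (if snd (\<omega> i) = r then 1 else 0)) = jps_W H n \<omega> r"
  by (subst sum_distrib_left[symmetric], subst real_jps_N[symmetric])
     (cases "jps_N n \<omega> r > 0"; simp add: jps_W_def)

lemma integral_jps_est:
  fixes Kn :: "real \<Rightarrow> real"
  assumes H: "H \<ge> 1" and M: "\<forall>r\<in>{1..H}. real_distribution (M r)"
    and Km: "Kn \<in> borel_measurable borel" and K0: "\<And>x. 0 \<le> Kn x" and K1: "\<And>x. Kn x \<le> 1"
  shows "(\<integral>\<omega>. jps_est H Kn n \<omega> t \<partial>jps_sample H M n)
      = (\<Sum>r\<in>{1..H}. (\<integral>x. Kn (t - x) \<partial>M r) * (\<integral>\<omega>. jps_W H n \<omega> r \<partial>jps_sample H M n))"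
proof -
  interpret S: prob_space "jps_sample H M n" by (rule prob_space_jps_sample[OF H M])
  let ?S = "jps_sample H M n"
  let ?a = "\<lambda>r \<omega>. jps_W H n \<omega> r / real (jps_N n \<omega> r)"
  let ?ind = "\<lambda>r i \<omega>. if snd (\<omega> i) = r then 1 else 0 :: real"
  have hm: "(\<lambda>x. Kn (t - x)) \<in> borel_measurable borel"
    using Km by measurable
  have integrable_kernel: "integrable ?S (\<lambda>\<omega>. ?a r \<omega> * (k (fst (\<omega> i)) * ?ind r i \<omega>))"
    if "i < n" and km: "k \<in> borel_measurable borel" and "\<And>x. \<bar>k x\<bar> \<le> 1" for r i k
  proof (rule S.integrable_const_bound[where B=1])
    show "AE \<omega> in ?S. norm (?a r \<omega> * (k (fst (\<omega> i)) * ?ind r i \<omega>)) \<le> 1"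
    proof (rule AE_I2)
      fix \<omega>
      have "\<bar>?a r \<omega>\<bar> * \<bar>k (fst (\<omega> i)) * ?ind r i \<omega>\<bar> \<le> 1"
        using abs_jps_W_div_N_le_1 \<open>\<And>x. \<bar>k x\<bar> \<le> 1\<close> by (intro mult_le_one) auto
      then show "norm (?a r \<omega> * (k (fst (\<omega> i)) * ?ind r i \<omega>)) \<le> 1"
        by (simp only: real_norm_def abs_mult)
    qed
    show "(\<lambda>\<omega>. ?a r \<omega> * (k (fst (\<omega> i)) * ?ind r i \<omega>)) \<in> borel_measurable ?S"
      using measurable_jps_W_div_N[OF H M] measurable_jps_sample_snd[OF H M \<open>i < n\<close>]
        measurable_compose[OF measurable_jps_sample_fst[OF H M \<open>i < n\<close>] km]
      by measurable
  qed
  have integrable_K: "integrable ?S (\<lambda>\<omega>. ?a r \<omega> * (Kn (t - fst (\<omega> i)) * ?ind r i \<omega>))"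
    if "i < n" for r i
    by (rule integrable_kernel[OF that hm]) (use K0 K1 in \<open>simp add: abs_le_iff\<close>)
  have integrable_1: "integrable ?S (\<lambda>\<omega>. ?a r \<omega> * ?ind r i \<omega>)" if "i < n" for r i
    using integrable_kernel[OF that, of "\<lambda>_. 1"] by simp
  have "(\<integral>\<omega>. jps_est H Kn n \<omega> t \<partial>?S)
      = (\<Sum>r\<in>{1..H}. \<integral>\<omega>. (\<Sum>i<n. ?a r \<omega> * (Kn (t - fst (\<omega> i)) * ?ind r i \<omega>)) \<partial>?S)"
    unfolding jps_est_eq_sum
    by (rule Bochner_Integration.integral_sum)
       (intro Bochner_Integration.integrable_sum integrable_K, simp)
  also have "\<dots> = (\<Sum>r\<in>{1..H}. \<Sum>i<n. \<integral>\<omega>. ?a r \<omega> * (Kn (t - fst (\<omega> i)) * ?ind r i \<omega>) \<partial>?S)"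
    by (intro sum.cong refl Bochner_Integration.integral_sum integrable_K) auto
  also have "\<dots> = (\<Sum>r\<in>{1..H}. \<Sum>i<n. (\<integral>x. Kn (t - x) \<partial>M r) * (\<integral>\<omega>. ?a r \<omega> * ?ind r i \<omega> \<partial>?S))"
    by (intro sum.cong refl integral_jps_sample_split_stratum[where B=1, OF H M]
          measurable_jps_W_div_N[OF H M] abs_jps_W_div_N_le_1 jps_W_div_N_fun_upd_fst hm)
       (use K0 K1 in auto)
  also have "\<dots> = (\<Sum>r\<in>{1..H}. (\<integral>x. Kn (t - x) \<partial>M r) * (\<integral>\<omega>. jps_W H n \<omega> r \<partial>?S))"
  proof (intro sum.cong refl)
    fix r
    have "(\<integral>\<omega>. jps_W H n \<omega> r \<partial>?S) = (\<integral>\<omega>. (\<Sum>i<n. ?a r \<omega> * ?ind r i \<omega>) \<partial>?S)"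
      by (intro Bochner_Integration.integral_cong refl sum_jps_W_div_N[symmetric])
    also have "\<dots> = (\<Sum>i<n. \<integral>\<omega>. ?a r \<omega> * ?ind r i \<omega> \<partial>?S)"
      by (rule Bochner_Integration.integral_sum) (rule integrable_1, simp)
    finally show "(\<Sum>i<n. (\<integral>x. Kn (t - x) \<partial>M r) * (\<integral>\<omega>. ?a r \<omega> * ?ind r i \<omega> \<partial>?S))
        = (\<integral>x. Kn (t - x) \<partial>M r) * (\<integral>\<omega>. jps_W H n \<omega> r \<partial>?S)"
      by (simp only: sum_distrib_left)
  qed
  finally show ?thesis .
qed

section \<open>Asymptotics of the weights\<close>

lemma prob_jps_N_eq_0:
  assumes H: "H \<ge> 1" and M: "\<forall>r\<in>{1..H}. real_distribution (M r)" and s: "s \<in> {1..H}"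
  shows "{\<omega> \<in> space (jps_sample H M n). jps_N n \<omega> s = 0} \<in> sets (jps_sample H M n)"
    and "measure (jps_sample H M n) {\<omega> \<in> space (jps_sample H M n). jps_N n \<omega> s = 0}
           = (1 - 1 / real H) ^ n"
proof -
  let ?Q = "jps_law H M"
  interpret Q: prob_space ?Q by (rule prob_space_jps_law[OF H M])
  interpret P: product_sigma_finite "\<lambda>_. ?Q" by unfold_locales
  interpret Ms: real_distribution "M s" using M s by auto
  have B: "{y::real \<times> nat. snd y \<noteq> s} \<in> sets ?Q"
  proof -
    have "{y::real \<times> nat. snd y \<noteq> s} = UNIV \<times> (UNIV - {s})" by auto
    then show ?thesis unfolding sets_jps_law[OF H M] by simp
  qed
  have A_eq: "{\<omega> \<in> space (jps_sample H M n). jps_N n \<omega> s = 0}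
      = PiE {..<n} (\<lambda>_. {y. snd y \<noteq> s})"
    by (auto simp: space_jps_sample[OF H M] jps_N_def PiE_def Pi_def extensional_def)
  show "{\<omega> \<in> space (jps_sample H M n). jps_N n \<omega> s = 0} \<in> sets (jps_sample H M n)"
    unfolding A_eq unfolding jps_sample_def by (rule sets_PiM_I_finite) (use B in auto)
  have "measure ?Q {y. snd y = s} = (\<integral>y. indicator {y. snd y = s} y \<partial>?Q)"
    by (simp add: space_jps_law[OF H M])
  also have "\<dots> = (\<integral>y. (\<lambda>_. 1::real) (fst y) * (if snd y = s then 1 else 0) \<partial>?Q)"
    by (intro Bochner_Integration.integral_cong refl) (auto simp: indicator_def)
  also have "\<dots> = 1 / real H"
    using integral_jps_law_stratum[OF H M s, of "\<lambda>_. 1"] Ms.prob_space by simp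
  finally have "measure ?Q {y. snd y = s} = 1 / real H" .
  moreover have "{y. snd y = s} = space ?Q - {y. snd y \<noteq> s}"
    by (auto simp: space_jps_law[OF H M])
  ultimately have "measure ?Q {y. snd y \<noteq> s} = 1 - 1 / real H"
    using Q.prob_compl[OF B] by simp
  then have "emeasure (jps_sample H M n) (PiE {..<n} (\<lambda>_. {y. snd y \<noteq> s}))
      = ennreal ((1 - 1 / real H) ^ n)"
    unfolding jps_sample_def using H B
    by (subst P.emeasure_PiM) (auto simp: Q.emeasure_eq_measure prod_ennreal ennreal_power)
  then show "measure (jps_sample H M n) {\<omega> \<in> space (jps_sample H M n). jps_N n \<omega> s = 0}
      = (1 - 1 / real H) ^ n"
    unfolding A_eq using H by (simp add: measure_def)
qed

lemma abs_expectation_jps_W_sub_le: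
  assumes H: "H \<ge> 1" and M: "\<forall>r\<in>{1..H}. real_distribution (M r)" and r: "r \<in> {1..H}"
  shows "\<bar>(\<integral>\<omega>. jps_W H n \<omega> r \<partial>jps_sample H M n) - 1 / real H\<bar> \<le> real H * (1 - 1 / real H) ^ n"
proof -
  interpret S: prob_space "jps_sample H M n" by (rule prob_space_jps_sample[OF H M])
  let ?S = "jps_sample H M n"
  define A where "A s = {\<omega> \<in> space ?S. jps_N n \<omega> s = 0}" for s
  have A: "A s \<in> sets ?S" "measure ?S (A s) = (1 - 1 / real H) ^ n" if "s \<in> {1..H}" for s
    using prob_jps_N_eq_0[OF H M that] unfolding A_def by auto
  have "integrable ?S (\<lambda>\<omega>. jps_W H n \<omega> r)"
    using jps_W_nonneg jps_W_le_1 measurable_jps_W[OF H M]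
    by (intro S.integrable_const_bound[where B=1]) auto
  then have Wi: "integrable ?S (\<lambda>\<omega>. jps_W H n \<omega> r - 1 / real H)"
    by simp
  have Ai: "integrable ?S (\<lambda>\<omega>. \<Sum>s\<in>{1..H}. indicator (A s) \<omega> :: real)"
    using A by (auto simp: S.emeasure_eq_measure)
  have "\<bar>(\<integral>\<omega>. jps_W H n \<omega> r \<partial>?S) - 1 / real H\<bar> = \<bar>\<integral>\<omega>. jps_W H n \<omega> r - 1 / real H \<partial>?S\<bar>"
    using \<open>integrable ?S (\<lambda>\<omega>. jps_W H n \<omega> r)\<close> by (simp add: S.prob_space)
  also have "\<dots> \<le> (\<integral>\<omega>. \<bar>jps_W H n \<omega> r - 1 / real H\<bar> \<partial>?S)"
    using integral_norm_bound[of ?S "\<lambda>\<omega>. jps_W H n \<omega> r - 1 / real H"] by simp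
  also have "\<dots> \<le> (\<integral>\<omega>. (\<Sum>s\<in>{1..H}. indicator (A s) \<omega>) \<partial>?S)"
  proof (intro integral_mono Ai integrable_abs Wi)
    fix \<omega> assume "\<omega> \<in> space ?S"
    then have "(\<Sum>s\<in>{1..H}. indicator (A s) \<omega>) = (\<Sum>s\<in>{1..H}. if jps_N n \<omega> s = 0 then 1 else 0 :: real)"
      by (intro sum.cong refl) (simp add: A_def)
    then show "\<bar>jps_W H n \<omega> r - 1 / real H\<bar> \<le> (\<Sum>s\<in>{1..H}. indicator (A s) \<omega>)"
      using abs_jps_W_sub_le_empty_strata[OF r] by simp
  qed
  also have "\<dots> = (\<Sum>s\<in>{1..H}. measure ?S (A s))"
    using A by (simp add: S.emeasure_eq_measure Bochner_Integration.integral_sum)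
  also have "\<dots> = real H * (1 - 1 / real H) ^ n"
    using A(2) by simp
  finally show ?thesis .
qed

lemma expectation_jps_W_tendsto:
  assumes H: "H \<ge> 1" and M: "\<forall>r\<in>{1..H}. real_distribution (M r)" and r: "r \<in> {1..H}"
  shows "(\<lambda>n. \<integral>\<omega>. jps_W H n \<omega> r \<partial>jps_sample H M n) \<longlonglongrightarrow> 1 / real H"
proof -
  have "(\<lambda>n. real H * (1 - 1 / real H) ^ n) \<longlonglongrightarrow> 0"
    using H by (intro tendsto_mult_right_zero LIMSEQ_power_zero) (auto simp: field_simps)
  then have "(\<lambda>n. (\<integral>\<omega>. jps_W H n \<omega> r \<partial>jps_sample H M n) - 1 / real H) \<longlonglongrightarrow> 0"
    by (rule Lim_null_comparison[rotated])
       (use abs_expectation_jps_W_sub_le[OF H M r] in simp)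
  then show ?thesis by (simp add: Lim_null[symmetric])
qed

section \<open>Distribution functions\<close>

lemma is_cdfD:
  assumes "is_cdf G"
  shows "G \<in> borel_measurable borel" and "0 \<le> G x" and "G x \<le> 1"
proof -
  obtain N where N: "real_distribution N" "cdf N = G" using assms unfolding is_cdf_def by auto
  interpret N: real_distribution N by (rule N(1))
  have "mono G" unfolding N(2)[symmetric] by (auto intro!: monoI N.cdf_nondecreasing)
  then show "G \<in> borel_measurable borel" by (rule borel_measurable_mono)
  show "0 \<le> G x" "G x \<le> 1" unfolding N(2)[symmetric] by (rule N.cdf_nonneg N.cdf_bounded_prob)+
qed

lemma isCont_e_cdf: "y \<noteq> 0 \<Longrightarrow> isCont e_cdf y"
proof -
  assume "y \<noteq> 0"
  then have "eventually (\<lambda>x. x \<in> (if y > 0 then {0<..} else {..<0})) (nhds y)"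
    by (intro eventually_nhds_in_open) auto
  then have "eventually (\<lambda>x. e_cdf x = e_cdf y) (nhds y)"
    by (rule eventually_mono) (use \<open>y \<noteq> 0\<close> in \<open>auto simp: e_cdf_def split: if_splits\<close>)
  then show ?thesis by (subst isCont_cong) auto
qed

text \<open>
  A jump of a mixture of distribution functions is the average of the jumps of its components,
  and these are nonnegative.
\<close>
lemma isCont_cdf_component_of_mixture:
  assumes M: "\<forall>r\<in>{1..H}. real_distribution (M r)"
    and F: "\<forall>t. F t = (\<Sum>r\<in>{1..H}. cdf (M r) t) / real H" and c: "isCont F t"
    and r: "r \<in> {1..H}"
  shows "isCont (cdf (M r)) t"
proof -
  have H: "real H > 0" using r by auto
  have jump: "cdf (M s) t - measure (M s) {..<t} = measure (M s) {t}" if "s \<in> {1..H}" for s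
  proof -
    interpret Ms: real_distribution "M s" using M that by auto
    have "measure (M s) ({..<t} \<union> {t}) = measure (M s) {..<t} + measure (M s) {t}"
      by (rule Ms.finite_measure_Union) auto
    then show ?thesis unfolding cdf_def by (simp add: ivl_disj_un(2)[symmetric])
  qed
  have "(F \<longlongrightarrow> (\<Sum>s\<in>{1..H}. measure (M s) {..<t}) / real H) (at_left t)"
    unfolding F[rule_format, abs_def]
  proof (intro tendsto_divide tendsto_sum tendsto_const)
    fix s assume "s \<in> {1..H}"
    then interpret Ms: real_distribution "M s" using M by auto
    show "((\<lambda>x. cdf (M s) x) \<longlongrightarrow> measure (M s) {..<t}) (at_left t)"
      using Ms.cdf_at_left by simp
  qed (use H in auto)
  moreover have "(F \<longlongrightarrow> F t) (at_left t)"
    using c by (simp add: isCont_def filterlim_at_split)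
  ultimately have "F t = (\<Sum>s\<in>{1..H}. measure (M s) {..<t}) / real H"
    using tendsto_unique[OF trivial_limit_at_left_real] by blast
  then have "(\<Sum>s\<in>{1..H}. measure (M s) {t}) = 0"
    using F H by (simp add: jump[symmetric] sum_subtractf)
  then have "measure (M r) {t} = 0"
    using r by (subst (asm) sum_nonneg_eq_0_iff) auto
  then show ?thesis
    using M r finite_borel_measure.isCont_cdf[OF real_distribution.finite_borel_measure_M] by blast
qed

lemma integral_shifted_kernel_tendsto_cdf:
  assumes K: "\<And>n. is_cdf (K n)" and w: "weak_conv K e_cdf"
    and N: "real_distribution N" and c: "isCont (cdf N) t"
  shows "(\<lambda>n. \<integral>x. K n (t - x) \<partial>N) \<longlonglongrightarrow> cdf N t"
proof -
  interpret N: real_distribution N by fact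
  have t: "measure N {t} = 0" using c N.isCont_cdf by simp
  have "(\<lambda>n. \<integral>x. K n (t - x) \<partial>N) \<longlonglongrightarrow> (\<integral>x. indicator {..<t} x \<partial>N)"
  proof (rule integral_dominated_convergence[where w="\<lambda>_. 1"])
    show "(\<lambda>x. K n (t - x)) \<in> borel_measurable N" for n
      using is_cdfD(1)[OF K] by measurable
    show "AE x in N. norm (K n (t - x)) \<le> 1" for n
      using is_cdfD(2,3)[OF K] by (simp add: abs_le_iff)
    show "AE x in N. (\<lambda>n. K n (t - x)) \<longlonglongrightarrow> indicator {..<t} x"
    proof (rule AE_I'[of "{t}"])
      show "{t} \<in> null_sets N" using t by (simp add: N.emeasure_eq_measure null_sets_def)
      have "(\<lambda>n. K n (t - x)) \<longlonglongrightarrow> indicator {..<t} x" if "x \<noteq> t" for x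
        using w isCont_e_cdf[of "t - x"] that unfolding weak_conv_def
        by (auto simp: e_cdf_def indicator_def)
      then show "{x \<in> space N. \<not> (\<lambda>n. K n (t - x)) \<longlonglongrightarrow> indicator {..<t} x} \<subseteq> {t}"
        by blast
    qed
  qed auto
  moreover have "(\<integral>x. indicator {..<t} x \<partial>N) = cdf N t"
    using t N.finite_measure_Union[of "{..<t}" "{t}"]
    by (simp add: cdf_def ivl_disj_un(2)[symmetric])
  ultimately show ?thesis by simp
qed

lemma jps_mean_eq_sum:
  assumes "H \<ge> 1" and "\<forall>r\<in>{1..H}. real_distribution (M r)" and "is_cdf (K n)"
  shows "jps_mean H M K n t
       = (\<Sum>r\<in>{1..H}. (\<integral>x. K n (t - x) \<partial>M r) * (\<integral>\<omega>. jps_W H n \<omega> r \<partial>jps_sample H M n))"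
  unfolding jps_mean_def using assms(1,2) is_cdfD[OF assms(3)] by (rule integral_jps_est)

lemma jps_mean_tendsto:
  assumes H: "H \<ge> 1" and K: "\<And>n. is_cdf (K n)" and w: "weak_conv K e_cdf"
    and M: "\<forall>r\<in>{1..H}. real_distribution (M r)"
    and F: "\<forall>t. F t = (\<Sum>r\<in>{1..H}. cdf (M r) t) / real H" and c: "isCont F t"
  shows "(\<lambda>n. jps_mean H M K n t) \<longlonglongrightarrow> F t"
proof -
  have "(\<lambda>n. \<Sum>r\<in>{1..H}. (\<integral>x. K n (t - x) \<partial>M r) * (\<integral>\<omega>. jps_W H n \<omega> r \<partial>jps_sample H M n))
      \<longlonglongrightarrow> (\<Sum>r\<in>{1..H}. cdf (M r) t * (1 / real H))"
    using M integral_shifted_kernel_tendsto_cdf[of K, OF K w] isCont_cdf_component_of_mixture[OF M F c]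
      expectation_jps_W_tendsto[OF H M]
    by (intro tendsto_sum tendsto_mult) auto
  then show ?thesis
    using F by (simp add: jps_mean_eq_sum[OF H M K] sum_divide_distrib)
qed

lemma real_distribution_return: "real_distribution (return borel (x :: real))"
  by (auto intro!: real_distribution.intro prob_space_return real_distribution_axioms.intro)

lemma cdf_return_0: "cdf (return borel 0) t = e_cdf t"
  by (simp add: cdf_def e_cdf_def measure_return indicator_def)

lemma weak_conv_of_jps_mean_tendsto:
  assumes H: "H \<ge> 1" and K: "\<And>n. is_cdf (K n)"
    and hyp: "\<And>t. isCont e_cdf t \<Longrightarrow>
               (\<lambda>n. jps_mean H (\<lambda>_. return borel 0) K n t) \<longlonglongrightarrow> e_cdf t"
  shows "weak_conv K e_cdf"
  unfolding weak_conv_def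
proof (intro allI impI)
  fix t assume t: "isCont e_cdf t"
  let ?Z = "\<lambda>_::nat. return (borel :: real measure) 0"
  have Z: "\<forall>r\<in>{1..H}. real_distribution (?Z r)"
    by (simp add: real_distribution_return)
  define c where "c n = (\<Sum>r\<in>{1..H}. \<integral>\<omega>. jps_W H n \<omega> r \<partial>jps_sample H ?Z n)" for n
  have "c \<longlonglongrightarrow> (\<Sum>r\<in>{1..H}. 1 / real H)"
    unfolding c_def by (intro tendsto_sum expectation_jps_W_tendsto[OF H Z])
  then have c1: "c \<longlonglongrightarrow> 1" using H by simp
  have "jps_mean H ?Z K n t = K n t * c n" for n
    using is_cdfD(1)[OF K]
    by (simp add: jps_mean_eq_sum[OF H Z K] c_def sum_distrib_left integral_return)
  then have "(\<lambda>n. K n t * c n / c n) \<longlonglongrightarrow> e_cdf t / 1"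
    using hyp[OF t] c1 by (intro tendsto_divide) auto
  moreover have "eventually (\<lambda>n. c n > 0) sequentially"
    using c1 by (rule order_tendstoD) simp
  then have "eventually (\<lambda>n. K n t * c n / c n = K n t) sequentially"
    by (rule eventually_mono) simp
  ultimately show "(\<lambda>n. K n t) \<longlonglongrightarrow> e_cdf t"
    by (simp add: Lim_transform_eventually)
qed

theorem theorem1:
  fixes H :: nat and K :: "nat \<Rightarrow> real \<Rightarrow> real"
  assumes "H \<ge> 2"
    and "\<And>n. is_cdf (K n)"
  shows
    "(weak_conv K e_cdf \<longrightarrow>
        (\<forall>(M :: nat \<Rightarrow> real measure) (F :: real \<Rightarrow> real).
           (\<forall>r\<in>{1..H}. real_distribution (M r)) \<longrightarrow>
           (\<forall>t. F t = (\<Sum>r\<in>{1..H}. cdf (M r) t) / real H) \<longrightarrow>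
           (\<forall>t. isCont F t \<longrightarrow> (\<lambda>n. jps_mean H M K n t) \<longlonglongrightarrow> F t)))
     \<and>
     ((\<forall>(M :: nat \<Rightarrow> real measure) (F :: real \<Rightarrow> real).
           (\<forall>r\<in>{1..H}. real_distribution (M r)) \<longrightarrow>
           (\<forall>t. F t = (\<Sum>r\<in>{1..H}. cdf (M r) t) / real H) \<longrightarrow>
           (\<forall>t. isCont F t \<longrightarrow> (\<lambda>n. jps_mean H M K n t) \<longlonglongrightarrow> F t))
      \<longrightarrow> weak_conv K e_cdf)"
proof (intro conjI impI allI)
  have H: "H \<ge> 1" using assms(1) by simp
  show "(\<lambda>n. jps_mean H M K n t) \<longlonglongrightarrow> F t"
    if "weak_conv K e_cdf" "\<forall>r\<in>{1..H}. real_distribution (M r)"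
      "\<forall>t. F t = (\<Sum>r\<in>{1..H}. cdf (M r) t) / real H" "isCont F t" for M F t
    using jps_mean_tendsto[of H K, OF H assms(2)] that by blast
  assume hyp: "\<forall>(M :: nat \<Rightarrow> real measure) (F :: real \<Rightarrow> real).
           (\<forall>r\<in>{1..H}. real_distribution (M r)) \<longrightarrow>
           (\<forall>t. F t = (\<Sum>r\<in>{1..H}. cdf (M r) t) / real H) \<longrightarrow>
           (\<forall>t. isCont F t \<longrightarrow> (\<lambda>n. jps_mean H M K n t) \<longlonglongrightarrow> F t)"
  have "e_cdf t = (\<Sum>r\<in>{1..H}. cdf (return borel 0) t) / real H" for t
    using H by (simp add: cdf_return_0)
  then show "weak_conv K e_cdf"
    using hyp[rule_format, of "\<lambda>_. return borel 0" e_cdf] H assms(2)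
    by (intro weak_conv_of_jps_mean_tendsto) (auto simp: real_distribution_return)
qed

end
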